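(* Let $N\ge1$, $T>0$ and $c\in(0,1]$. Let $\mathcal{A}^\ast=(a_1,a_2,\dots)$ and $\mathcal{B}^\ast=(b_1,b_2,\dots)$ be types (partitions of $N$) such that \[ |a_i-b_i|\le\frac{3N}{T}+\frac{a_i+b_i}{T^c}\quad\text{for all } i. \] Let $\mathcal{A}_0=\mathcal{A}^\ast,\mathcal{A}_1,\dots,\mathcal{A}_L$ be the types produced by the chopping procedure. Then for every $\ell\in[L]$ with $\ell\le(\log_2T)-2$, we have $\|\mathcal{A}_\ell-\mathcal{A}_{\ell-1}\|\le\frac{8N}{T^c}$.
   Context: A type is a list $(a_1,\dots,a_u)$ of positive integers with $a_1\ge\dots\ge a_u$ and $\sum a_i=N$, with the convention $a_i=0$ for $i>u$. A row-array is a list of $2N$ nonnegative integers $(a_1,\dots,a_{2N})$ (not necessarily sorted) with sum $N$; $\operatorname{type}(a_1,\dots,a_{2N})$ is the type obtained by sorting the nonzero entries in descending order. Every type is regarded as a row-array by padding with zeros. For types $\mathcal{A}=(a_i)$, $\mathcal{B}=(b_i)$ define $\|\mathcal{A}-\mathcal{B}\|:=\frac12\sum_{i=1}^N|a_i-b_i|$. Chopping procedure: let $L:=\lceil\log_2N\rceil$ and let $P$ be the least power of $2$ with $P\ge N$. Initialize the row-array $(a_1,\dots,a_{2N})$ to $\mathcal{A}^\ast$ and let $(b_1,\dots,b_{2N})$ be $\mathcal{B}^\ast$ (fixed throughout). For $\ell=1,\dots,L$: for every $i\in[2N]$ such that $a_i-b_i\ge P/2^\ell$ and $a_i>P/2^\ell$,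 set $a_i:=a_i-P/2^\ell$, then find some $j\in[2N]$ with $a_j=b_j=0$ and set $a_j:=P/2^\ell$; after processing all such $i$, set $\mathcal{A}_\ell:=\operatorname{type}(a_1,\dots,a_{2N})$. *)

theory Defs
  imports Complex_Main
begin

text \<open>A type of N: list of positive integers, weakly decreasing, summing to N.
  Entries are 0-indexed: the paper's a_i is entry (i-1).\<close>
definition is_type :: "nat \<Rightarrow> nat list \<Rightarrow> bool" where
  "is_type N xs \<longleftrightarrow> sorted_wrt (\<ge>) xs \<and> 0 \<notin> set xs \<and> sum_list xs = N"

definition ent :: "nat list \<Rightarrow> nat \<Rightarrow> nat" where
  "ent xs i = (if i < length xs then xs ! i else 0)"

text \<open>Row-arrays of length 2N are functions on positions 0..<2N (zero elsewhere).
  The type of a row-array: its nonzero entries sorted in descending order.\<close>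
definition type_of_arr :: "nat \<Rightarrow> (nat \<Rightarrow> nat) \<Rightarrow> nat list" where
  "type_of_arr N a = rev (sort (filter (\<lambda>x. x \<noteq> 0) (map a [0..<2*N])))"

definition pad :: "nat \<Rightarrow> nat list \<Rightarrow> (nat \<Rightarrow> nat)" where
  "pad N xs = (\<lambda>i. if i < 2*N then ent xs i else 0)"

definition type_dist :: "nat \<Rightarrow> nat list \<Rightarrow> nat list \<Rightarrow> real" where
  "type_dist N A B = (1/2) * (\<Sum>i<N. \<bar>real (ent A i) - real (ent B i)\<bar>)"

definition chopL :: "nat \<Rightarrow> nat" where
  "chopL N = nat \<lceil>log 2 (real N)\<rceil>"

definition chopP :: "nat \<Rightarrow> nat" where
  "chopP N = (LEAST p. (\<exists>k. p = 2 ^ k) \<and> N \<le> p)"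

text \<open>One level of the chopping procedure with chunk size s (= P/2^l), against fixed b.
  All i with a_i - b_i >= s and a_i > s are chopped; each chopped piece is placed at a
  distinct position j with a_j = b_j = 0 (chosen nondeterministically, via injective f).\<close>
definition chop_step :: "nat \<Rightarrow> nat \<Rightarrow> (nat \<Rightarrow> nat) \<Rightarrow> (nat \<Rightarrow> nat) \<Rightarrow> (nat \<Rightarrow> nat) \<Rightarrow> bool" where
  "chop_step N s b a a' \<longleftrightarrow>
     (\<exists>f. let I = {i. i < 2*N \<and> a i \<ge> b i + s \<and> a i > s} in
        inj_on f I \<and> f ` I \<subseteq> {j. j < 2*N \<and> a j = 0 \<and> b j = 0} \<and>
        a' = (\<lambda>k. if k \<in> I then a k - s else if k \<in> f ` I then s else a k))"

definition chop_run :: "nat \<Rightarrow> nat list \<Rightarrow> nat list \<Rightarrow> (nat \<Rightarrow> nat \<Rightarrow> nat) \<Rightarrow> bool" where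
  "chop_run N A B arr \<longleftrightarrow> arr 0 = pad N A \<and>
     (\<forall>l\<in>{1..chopL N}. chop_step N (chopP N div 2 ^ l) (pad N B) (arr (l - 1)) (arr l))"

end

theory Submission
  imports Defs
begin

text \<open>
  Sorting row-arrays into types is an \<open>\<ell>\<^sub>1\<close>-contraction (layer-cake: the distance is a sum
  over thresholds \<open>t\<close> of differences of the numbers of entries exceeding \<open>t\<close>, and these
  numbers do not change under sorting). Hence \<open>\<parallel>A\<^sub>l - A\<^sub>l\<^sub>-\<^sub>1\<parallel>\<close> is at most \<open>s\<cdot>|I|\<close>,
  where \<open>s = P/2\<^sup>l \<ge> 4N/T\<close> is the chunk size and \<open>I\<close> the set of positions chopped at level
  \<open>l\<close>. As chopping preserves the total mass, \<open>s\<cdot>|I| \<le> \<Sum>\<^sub>i\<^sub>\<in>\<^sub>I (a\<^sub>i - b\<^sub>i)\<close> is bounded by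
  \<open>\<Sum>\<^sub>i ([i\<in>I](a\<^sub>i - b\<^sub>i) + a\<^sup>*\<^sub>i - a\<^sub>i)\<close>, and every positive term sits at a position whose
  original excess \<open>a\<^sup>*\<^sub>i - b\<^sub>i\<close> is at least \<open>s\<close>. Such an excess dominates the additive
  error \<open>3N/T \<le> 3s/4\<close> of the hypothesis, so it is at most \<open>4(a\<^sup>*\<^sub>i + b\<^sub>i)/T\<^sup>c\<close>; summing
  over \<open>i\<close> gives \<open>8N/T\<^sup>c\<close>.
\<close>

lemma abs_diff_eq_sum_thresholds:
  fixes a b M :: nat
  assumes "a \<le> M" and "b \<le> M"
  shows "(\<Sum>t<M. \<bar>of_bool (t < a) - of_bool (t < b) :: real\<bar>) = \<bar>real a - real b\<bar>"
proof -
  have "(\<Sum>t<M. \<bar>of_bool (t < a) - of_bool (t < b) :: real\<bar>)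
      = (\<Sum>t\<in>{min a b..<max a b}. 1)"
    using assms by (intro sum.mono_neutral_cong_right) auto
  also have "\<dots> = \<bar>real a - real b\<bar>"
    by (cases "a \<le> b") (simp_all add: min_def max_def of_nat_diff)
  finally show ?thesis .
qed

lemma down_closed_eq_lessThan_card:
  fixes S :: "nat set"
  assumes "finite S" and "\<And>i j. i \<in> S \<Longrightarrow> j \<le> i \<Longrightarrow> j \<in> S"
  shows "S = {..<card S}"
proof -
  have "S \<subseteq> {..<card S}"
  proof
    fix i assume "i \<in> S"
    then have "{..i} \<subseteq> S" using assms(2) by auto
    then have "card {..i} \<le> card S" using assms(1) by (rule card_mono[rotated])
    then show "i \<in> {..<card S}" by simp
  qed
  then show ?thesis using card_subset_eq[OF finite_lessThan] by simp
qed

definition count_above :: "nat \<Rightarrow> (nat \<Rightarrow> nat) \<Rightarrow> nat \<Rightarrow> nat" where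
  "count_above N x t = card {i. i < 2*N \<and> t < x i}"

lemma real_count_above: "real (count_above N x t) = (\<Sum>i<2*N. of_bool (t < x i))"
  by (simp add: count_above_def Int_def conj_commute lessThan_def)

lemma count_above_le: "count_above N x t \<le> 2*N"
  unfolding count_above_def by (rule order.trans[OF card_mono[of "{..<2*N}"]]) auto

lemma length_filter_type_of_arr: "length (filter ((<) t) (type_of_arr N x)) = count_above N x t"
proof -
  have "length (filter ((<) t) (type_of_arr N x))
      = length (filter ((<) t) (filter (\<lambda>v. v \<noteq> 0) (map x [0..<2*N])))"
    unfolding type_of_arr_def rev_filter[symmetric] filter_sort by simp
  also have "\<dots> = length (filter ((<) t) (map x [0..<2*N]))"
    unfolding filter_filter by (intro arg_cong[where f = length] filter_cong) auto
  also have "\<dots> = count_above N x t"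
    by (simp add: count_above_def length_filter_conv_card cong: conj_cong)
  finally show ?thesis .
qed

lemma less_ent_type_of_arr_iff: "t < ent (type_of_arr N x) i \<longleftrightarrow> i < count_above N x t"
proof -
  let ?X = "type_of_arr N x"
  let ?S = "{j. j < length ?X \<and> t < ?X ! j}"
  have "?S = {..<card ?S}"
  proof (rule down_closed_eq_lessThan_card)
    fix i j assume "i \<in> ?S" "j \<le> i"
    moreover have "sorted_wrt (\<ge>) ?X" by (simp add: type_of_arr_def sorted_wrt_rev)
    ultimately show "j \<in> ?S"
      by (auto simp: sorted_wrt_iff_nth_less le_less intro: less_le_trans)
  qed simp
  moreover have "card ?S = count_above N x t"
    using length_filter_type_of_arr by (simp add: length_filter_conv_card)
  ultimately have "i \<in> ?S \<longleftrightarrow> i < count_above N x t" by auto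
  then show ?thesis by (auto simp: ent_def)
qed

lemma ent_type_of_arr_le:
  assumes "\<And>i. i < 2*N \<Longrightarrow> x i \<le> M"
  shows "ent (type_of_arr N x) i \<le> M"
proof (cases "i < length (type_of_arr N x)")
  case True
  moreover have "set (type_of_arr N x) \<subseteq> x ` {..<2*N}"
    by (auto simp: type_of_arr_def)
  ultimately have "type_of_arr N x ! i \<in> x ` {..<2*N}"
    using nth_mem by blast
  then show ?thesis using assms True by (auto simp: ent_def)
qed (simp add: ent_def)

lemma sum_abs_diff_type_of_arr_le:
  "(\<Sum>i<2*N. \<bar>real (ent (type_of_arr N x) i) - real (ent (type_of_arr N y) i)\<bar>)
     \<le> (\<Sum>i<2*N. \<bar>real (x i) - real (y i)\<bar>)"
proof -
  define M where "M = (\<Sum>i<2*N. x i + y i)"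
  have xM: "x i \<le> M" and yM: "y i \<le> M" if "i < 2*N" for i
    using member_le_sum[of i "{..<2*N}" "\<lambda>i. x i + y i"] that by (auto simp: M_def)
  let ?d = "\<lambda>u v. \<bar>of_bool u - of_bool v :: real\<bar>"
  have "(\<Sum>i<2*N. \<bar>real (ent (type_of_arr N x) i) - real (ent (type_of_arr N y) i)\<bar>)
      = (\<Sum>i<2*N. \<Sum>t<M. ?d (t < ent (type_of_arr N x) i) (t < ent (type_of_arr N y) i))"
    using xM yM
    by (intro sum.cong refl abs_diff_eq_sum_thresholds[symmetric] ent_type_of_arr_le) auto
  also have "\<dots> = (\<Sum>t<M. \<Sum>i<2*N. ?d (i < count_above N x t) (i < count_above N y t))"
    by (subst sum.swap) (simp add: less_ent_type_of_arr_iff)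
  also have "\<dots> = (\<Sum>t<M. \<bar>real (count_above N x t) - real (count_above N y t)\<bar>)"
    by (intro sum.cong refl abs_diff_eq_sum_thresholds count_above_le)
  also have "\<dots> \<le> (\<Sum>t<M. \<Sum>i<2*N. ?d (t < x i) (t < y i))"
    unfolding real_count_above sum_subtractf[symmetric] by (intro sum_mono sum_abs)
  also have "\<dots> = (\<Sum>i<2*N. \<bar>real (x i) - real (y i)\<bar>)"
    using xM yM by (subst sum.swap) (intro sum.cong refl abs_diff_eq_sum_thresholds; simp)
  finally show ?thesis .
qed

lemma type_dist_type_of_arr_le:
  "type_dist N (type_of_arr N x) (type_of_arr N y) \<le> (\<Sum>i<2*N. \<bar>real (x i) - real (y i)\<bar>) / 2"
proof -
  have "(\<Sum>i<N. \<bar>real (ent (type_of_arr N x) i) - real (ent (type_of_arr N y) i)\<bar>)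
      \<le> (\<Sum>i<2*N. \<bar>real (ent (type_of_arr N x) i) - real (ent (type_of_arr N y) i)\<bar>)"
    by (rule sum_mono2) auto
  also have "\<dots> \<le> (\<Sum>i<2*N. \<bar>real (x i) - real (y i)\<bar>)"
    by (rule sum_abs_diff_type_of_arr_le)
  finally show ?thesis unfolding type_dist_def by simp
qed

definition chopped :: "nat \<Rightarrow> nat \<Rightarrow> (nat \<Rightarrow> nat) \<Rightarrow> (nat \<Rightarrow> nat) \<Rightarrow> nat set" where
  "chopped N s b a = {i. i < 2*N \<and> a i \<ge> b i + s \<and> a i > s}"

lemma chopped_subset: "chopped N s b a \<subseteq> {..<2*N}"
  by (auto simp: chopped_def)

lemma chop_step_mass:
  assumes "chop_step N s b a a'"
  shows "(\<Sum>i<2*N. real (a' i)) = (\<Sum>i<2*N. real (a i))"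
    and "(\<Sum>i<2*N. \<bar>real (a' i) - real (a i)\<bar>) = 2 * real s * real (card (chopped N s b a))"
proof -
  let ?I = "chopped N s b a"
  obtain f where inj: "inj_on f ?I" and fI: "f ` ?I \<subseteq> {j. j < 2*N \<and> a j = 0 \<and> b j = 0}"
    and a': "a' = (\<lambda>k. if k \<in> ?I then a k - s else if k \<in> f ` ?I then s else a k)"
    using assms unfolding chop_step_def chopped_def Let_def by blast
  have disj: "?I \<inter> f ` ?I = {}" using fI by (auto simp: chopped_def)
  have "?I \<subseteq> {..<2*N}" "f ` ?I \<subseteq> {..<2*N}" using chopped_subset fI by auto
  then have mass: "(\<Sum>i<2*N. real s * of_bool (i \<in> ?I)) = real s * real (card ?I)"
    "(\<Sum>i<2*N. real s * of_bool (i \<in> f ` ?I)) = real s * real (card ?I)"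
    using card_image[OF inj] by (simp_all add: Int_absorb1 flip: sum_distrib_left)
  have change: "real (a' k) = real (a k) - real s * of_bool (k \<in> ?I) + real s * of_bool (k \<in> f ` ?I)" for k
    using disj fI by (auto simp: a' chopped_def of_nat_diff)
  then show "(\<Sum>i<2*N. real (a' i)) = (\<Sum>i<2*N. real (a i))"
    by (simp only: change sum.distrib sum_subtractf mass)
  have "\<bar>real (a' k) - real (a k)\<bar> = real s * of_bool (k \<in> ?I) + real s * of_bool (k \<in> f ` ?I)" for k
    using disj by (cases "k \<in> ?I") (auto simp: change)
  then show "(\<Sum>i<2*N. \<bar>real (a' i) - real (a i)\<bar>) = 2 * real s * real (card ?I)"
    by (simp only: sum.distrib mass)
qed

text \<open>Positions empty in both \<open>a0\<close> and \<open>b\<close> are exempt: they receive the chopped-off pieces.\<close>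

definition chop_invariant :: "nat \<Rightarrow> (nat \<Rightarrow> nat) \<Rightarrow> (nat \<Rightarrow> nat) \<Rightarrow> nat \<Rightarrow> (nat \<Rightarrow> nat) \<Rightarrow> bool" where
  "chop_invariant N a0 b s a \<longleftrightarrow>
     (\<Sum>i<2*N. real (a i)) = (\<Sum>i<2*N. real (a0 i)) \<and>
     (\<forall>i<2*N. a0 i \<noteq> 0 \<or> b i \<noteq> 0 \<longrightarrow>
        a i \<le> a0 i \<and> (a i \<noteq> a0 i \<longrightarrow> b i \<le> a i \<and> b i + s \<le> a0 i))"

lemma chop_invariant_init: "chop_invariant N a0 b s a0"
  by (simp add: chop_invariant_def)

lemma chop_invariant_step:
  assumes inv: "chop_invariant N a0 b s a" and "s' \<le> s" and step: "chop_step N s' b a a'"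
  shows "chop_invariant N a0 b s' a'"
proof -
  let ?I = "chopped N s' b a"
  obtain f where fI: "f ` ?I \<subseteq> {j. j < 2*N \<and> a j = 0 \<and> b j = 0}"
    and a': "a' = (\<lambda>k. if k \<in> ?I then a k - s' else if k \<in> f ` ?I then s' else a k)"
    using step unfolding chop_step_def chopped_def Let_def by blast
  have "a' i \<le> a0 i \<and> (a' i \<noteq> a0 i \<longrightarrow> b i \<le> a' i \<and> b i + s' \<le> a0 i)"
    if "i < 2*N" and "a0 i \<noteq> 0 \<or> b i \<noteq> 0" for i
  proof -
    have old: "a i \<le> a0 i \<and> (a i \<noteq> a0 i \<longrightarrow> b i \<le> a i \<and> b i + s \<le> a0 i)"
      using inv that unfolding chop_invariant_def by blast
    consider "i \<in> ?I" | "i \<notin> ?I" "i \<in> f ` ?I" | "i \<notin> ?I" "i \<notin> f ` ?I" by blast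
    then show ?thesis
    proof cases
      case 1
      then show ?thesis using old by (auto simp: a' chopped_def)
    next
      case 2
      then have "a i = 0" "b i = 0" using fI by auto
      then show ?thesis using old that \<open>s' \<le> s\<close> by (auto simp: a')
    next
      case 3
      then show ?thesis using old \<open>s' \<le> s\<close> by (auto simp: a')
    qed
  qed
  moreover have "(\<Sum>i<2*N. real (a' i)) = (\<Sum>i<2*N. real (a0 i))"
    using chop_step_mass(1)[OF step] inv unfolding chop_invariant_def by simp
  ultimately show ?thesis unfolding chop_invariant_def by blast
qed

lemma gap_le_of_approx:
  fixes d q R s :: real
  assumes "0 \<le> s" and "s \<le> d" and "\<bar>d\<bar> \<le> q + R" and "4 * q \<le> 3 * s"
  shows "d \<le> 4 * R"
  using assms by linarith

lemma chunk_mul_card_chopped_le: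
  fixes q \<tau> :: real
  assumes inv: "chop_invariant N a0 b s' a" and "s \<le> s'" and "4 * q \<le> 3 * real s" and "0 < \<tau>"
    and approx: "\<And>i. i < 2*N \<Longrightarrow> \<bar>real (a0 i) - real (b i)\<bar> \<le> q + (real (a0 i) + real (b i)) / \<tau>"
  shows "real s * real (card (chopped N s b a)) \<le> 4 * (\<Sum>i<2*N. real (a0 i) + real (b i)) / \<tau>"
proof -
  let ?C = "chopped N s b a"
  define gain where
    "gain i = (if i \<in> ?C then real (a i) - real (b i) else 0) + real (a0 i) - real (a i)" for i
  have gain_le: "gain i \<le> 4 * ((real (a0 i) + real (b i)) / \<tau>)" if i: "i < 2*N" for i
  proof (cases "a0 i = 0 \<and> b i = 0")
    case True
    then show ?thesis using \<open>0 < \<tau>\<close> by (simp add: gain_def)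
  next
    case False
    have old: "a i \<le> a0 i \<and> (a i \<noteq> a0 i \<longrightarrow> b i \<le> a i \<and> b i + s' \<le> a0 i)"
      using inv i False unfolding chop_invariant_def by blast
    have "gain i \<le> 0 \<or> (gain i \<le> real (a0 i) - real (b i) \<and> real s \<le> real (a0 i) - real (b i))"
      using old \<open>s \<le> s'\<close> by (auto simp: gain_def chopped_def)
    then show ?thesis
    proof (elim disjE conjE)
      assume "gain i \<le> 0"
      moreover have "0 \<le> (real (a0 i) + real (b i)) / \<tau>" using \<open>0 < \<tau>\<close> by simp
      ultimately show ?thesis by linarith
    next
      assume "gain i \<le> real (a0 i) - real (b i)" and "real s \<le> real (a0 i) - real (b i)"
      then show ?thesis
        using gap_le_of_approx[OF _ _ approx[OF i] \<open>4 * q \<le> 3 * real s\<close>] by simp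
    qed
  qed
  have "real s * real (card ?C) = (\<Sum>i\<in>?C. real s)" by simp
  also have "\<dots> \<le> (\<Sum>i\<in>?C. real (a i) - real (b i))"
    by (intro sum_mono) (auto simp: chopped_def)
  also have "\<dots> = (\<Sum>i<2*N. if i \<in> ?C then real (a i) - real (b i) else 0)"
    by (simp add: sum.inter_restrict[symmetric] Int_absorb1[OF chopped_subset])
  also have "\<dots> = (\<Sum>i<2*N. gain i)"
    using inv by (simp add: gain_def sum.distrib sum_subtractf chop_invariant_def)
  also have "\<dots> \<le> (\<Sum>i<2*N. 4 * ((real (a0 i) + real (b i)) / \<tau>))"
    by (intro sum_mono gain_le) simp
  also have "\<dots> = 4 * (\<Sum>i<2*N. real (a0 i) + real (b i)) / \<tau>"
    by (simp add: sum_distrib_left sum_divide_distrib)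
  finally show ?thesis .
qed

lemma chop_run_invariant:
  assumes run: "chop_run N A B arr" and "l \<le> chopL N"
  shows "chop_invariant N (pad N A) (pad N B) (chopP N div 2 ^ l) (arr l)"
  using \<open>l \<le> chopL N\<close>
proof (induction l)
  case 0
  then show ?case using run by (simp add: chop_run_def chop_invariant_init)
next
  case (Suc l)
  have "Suc l \<in> {1..chopL N}" using Suc.prems by simp
  then have "chop_step N (chopP N div 2 ^ Suc l) (pad N B) (arr (Suc l - 1)) (arr (Suc l))"
    using run unfolding chop_run_def by blast
  moreover have "chopP N div 2 ^ Suc l \<le> chopP N div 2 ^ l"
    by (intro div_le_mono2) auto
  ultimately show ?case using Suc by (auto intro: chop_invariant_step)
qed

lemma chopP_eq_power:
  assumes "1 \<le> N"
  obtains k where "chopP N = 2 ^ k" and "N \<le> 2 ^ k" and "chopL N \<le> k"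
proof -
  have "\<exists>p. (\<exists>k. p = (2::nat) ^ k) \<and> N \<le> p"
    by (rule exI[of _ "2 ^ N"]) (auto intro: less_imp_le less_exp)
  from LeastI_ex[OF this] obtain k where k: "chopP N = 2 ^ k" "N \<le> 2 ^ k"
    unfolding chopP_def by auto
  have "real N \<le> 2 ^ k"
    using k(2) by (metis of_nat_le_iff of_nat_numeral of_nat_power)
  then have "log 2 (real N) \<le> log 2 (2 ^ k)"
    using assms by (intro log_mono) auto
  then have "chopL N \<le> k"
    by (simp add: chopL_def log_nat_power ceiling_le_iff nat_le_iff)
  with k show thesis by (rule that)
qed

lemma four_mul_le_chunk_mul:
  fixes T :: real
  assumes "1 \<le> N" and "l \<le> chopL N" and "real l \<le> log 2 T - 2" and "0 < T"
  shows "4 * real N \<le> real (chopP N div 2 ^ l) * T"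
proof -
  obtain k where k: "chopP N = 2 ^ k" "N \<le> 2 ^ k" "chopL N \<le> k"
    using chopP_eq_power[OF \<open>1 \<le> N\<close>] .
  have "chopP N div 2 ^ l * 2 ^ l = 2 ^ k"
    using k(1,3) \<open>l \<le> chopL N\<close> by (simp add: le_imp_power_dvd)
  then have chunk: "real (chopP N div 2 ^ l) * 2 ^ l = 2 ^ k"
    by (metis of_nat_mult of_nat_numeral of_nat_power)
  have "(2::real) ^ l = 2 powr real l" by (simp add: powr_realpow)
  also have "\<dots> \<le> 2 powr (log 2 T - 2)" using assms(3) by simp
  also have "\<dots> = T / 4" using \<open>0 < T\<close> by (simp add: powr_diff)
  finally have "4 * 2 ^ l \<le> T" by simp
  have "4 * real N \<le> 4 * 2 ^ k"
    using k(2) by (metis of_nat_le_iff of_nat_numeral of_nat_power mult_left_mono zero_le_numeral)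
  also have "\<dots> = real (chopP N div 2 ^ l) * (4 * 2 ^ l)" using chunk by simp
  also have "\<dots> \<le> real (chopP N div 2 ^ l) * T"
    using \<open>4 * 2 ^ l \<le> T\<close> by (intro mult_left_mono) auto
  finally show ?thesis .
qed

lemma length_le_sum_list: "0 \<notin> set xs \<Longrightarrow> length xs \<le> sum_list (xs :: nat list)"
  by (induction xs) auto

lemma sum_pad_type:
  assumes "is_type N A"
  shows "(\<Sum>i<2*N. real (pad N A i)) = real N"
proof -
  have "length A \<le> sum_list A"
    using assms length_le_sum_list unfolding is_type_def by blast
  then have len: "length A \<le> 2*N" using assms unfolding is_type_def by simp
  have "(\<Sum>i<2*N. real (pad N A i)) = (\<Sum>i<length A. real (ent A i))"
    using len by (intro sum.mono_neutral_cong_right) (auto simp: pad_def ent_def)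
  also have "\<dots> = real (sum_list A)"
    by (simp add: ent_def sum_list_sum_nth lessThan_atLeast0)
  finally show ?thesis using assms unfolding is_type_def by simp
qed

theorem lemma14:
  fixes N :: nat and T c :: real and A B :: "nat list" and arr :: "nat \<Rightarrow> nat \<Rightarrow> nat"
  assumes "N \<ge> 1" and "T > 0" and "0 < c" and "c \<le> 1"
    and "is_type N A" and "is_type N B"
    and "\<forall>i. \<bar>real (ent A i) - real (ent B i)\<bar>
              \<le> 3 * real N / T + (real (ent A i) + real (ent B i)) / T powr c"
    and "chop_run N A B arr"
  shows "\<forall>l\<in>{1..chopL N}. real l \<le> log 2 T - 2 \<longrightarrow>
           type_dist N (type_of_arr N (arr l)) (type_of_arr N (arr (l - 1))) \<le> 8 * real N / T powr c"
proof (intro ballI impI)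
  fix l assume l: "l \<in> {1..chopL N}" and "real l \<le> log 2 T - 2"
  define s where "s = chopP N div 2 ^ l"
  have step: "chop_step N s (pad N B) (arr (l - 1)) (arr l)"
    using assms(8) l unfolding chop_run_def s_def by blast
  have inv: "chop_invariant N (pad N A) (pad N B) (chopP N div 2 ^ (l - 1)) (arr (l - 1))"
    using l by (intro chop_run_invariant[OF assms(8)]) auto
  have s_le: "s \<le> chopP N div 2 ^ (l - 1)"
    unfolding s_def by (intro div_le_mono2) auto
  have error_le: "4 * (3 * real N / T) \<le> 3 * real s"
    using four_mul_le_chunk_mul[OF assms(1) _ \<open>real l \<le> log 2 T - 2\<close> assms(2)] l assms(2)
    by (simp add: s_def field_simps)
  have approx: "\<bar>real (pad N A i) - real (pad N B i)\<bar>
      \<le> 3 * real N / T + (real (pad N A i) + real (pad N B i)) / T powr c" if "i < 2*N" for i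
    using assms(7) that by (simp add: pad_def)
  have "type_dist N (type_of_arr N (arr l)) (type_of_arr N (arr (l - 1)))
      \<le> (\<Sum>i<2*N. \<bar>real (arr l i) - real (arr (l - 1) i)\<bar>) / 2"
    by (rule type_dist_type_of_arr_le)
  also have "\<dots> = real s * real (card (chopped N s (pad N B) (arr (l - 1))))"
    using chop_step_mass(2)[OF step] by simp
  also have "\<dots> \<le> 4 * (\<Sum>i<2*N. real (pad N A i) + real (pad N B i)) / T powr c"
    using assms(2) by (intro chunk_mul_card_chopped_le[OF inv s_le error_le] approx) auto
  also have "\<dots> = 8 * real N / T powr c"
    using sum_pad_type[OF assms(5)] sum_pad_type[OF assms(6)] by (simp add: sum.distrib)
  finally show "type_dist N (type_of_arr N (arr l)) (type_of_arr N (arr (l - 1))) \<le> 8 * real N / T powr c" .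
qed

end
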